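(* Let $\tau\ge1$ and two candidates $P,Q$. If $P$ beats $Q$ under Weighted Majority Rule 3, then $SC(P)\le\tau\,SC(Q)+2\,SC(Z)$ for every point $Z$ of the metric space.
   Context: Voters $N$ and candidates are points of an arbitrary metric space $(X,d)$; $SC(Y)=\sum_{i\in N}d(i,Y)$ for $Y\in X$. Let $A=\{i: d(i,Q)/d(i,P)\ge\tau\}$ and $B=\{j: d(j,P)/d(j,Q)\ge\tau\}$. Weighted Majority Rule 3 selects $P$ over $Q$ iff $|A|\ge|B|$ (all other voters are ignored). *)

theory Defs
  imports Main "HOL-Analysis.Analysis"
begin

definition social_cost :: "'v set \<Rightarrow> ('v \<Rightarrow> 'a::metric_space) \<Rightarrow> 'a \<Rightarrow> real" where
  "social_cost N loc Y = (\<Sum>i\<in>N. dist (loc i) Y)"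

text \<open>A = voters with d(i,Q)/d(i,P) \<ge> tau, written without division
(a zero denominator is read as ratio +infinity).\<close>
definition wm3_A :: "real \<Rightarrow> 'v set \<Rightarrow> ('v \<Rightarrow> 'a::metric_space) \<Rightarrow> 'a \<Rightarrow> 'a \<Rightarrow> 'v set" where
  "wm3_A \<tau> N loc P Q = {i\<in>N. dist (loc i) Q \<ge> \<tau> * dist (loc i) P}"

definition wmr3_selects :: "real \<Rightarrow> 'v set \<Rightarrow> ('v \<Rightarrow> 'a::metric_space) \<Rightarrow> 'a \<Rightarrow> 'a \<Rightarrow> bool" where
  "wmr3_selects \<tau> N loc P Q \<longleftrightarrow> card (wm3_A \<tau> N loc P Q) \<ge> card (wm3_A \<tau> N loc Q P)"

end

theory Submission
  imports Defs
begin

text \<open>Pair every voter of B - A with a distinct voter of A - B; the counting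
hypothesis guarantees enough partners. For a paired voter i \<in> B - A and its partner
j \<in> A - B, the triangle inequality through Z together with d(j,P) \<le> d(j,Q) gives
d(i,P) + d(j,P) \<le> d(i,Q) + d(j,Q) + 2 (d(i,Z) + d(j,Z)). Every unpaired voter
satisfies d(k,P) \<le> \<tau> d(k,Q) directly, because it lies in A or outside B.\<close>

lemma card_Diff_le_card_Diff:
  assumes "finite A" "finite B" "card B \<le> card A"
  shows "card (B - A) \<le> card (A - B)"
  using assms card_Int_Diff[of A B] card_Int_Diff[of B A] by (simp add: Int_commute)

lemma sum_nonpos_by_pairing:
  fixes f :: "'v \<Rightarrow> real"
  assumes fin: "finite N" and "S \<subseteq> N" "T \<subseteq> N" "S \<inter> T = {}" "card S \<le> card T"
    and outside: "\<And>k. k \<in> N - S \<Longrightarrow> f k \<le> 0"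
    and paired: "\<And>i j. i \<in> S \<Longrightarrow> j \<in> T \<Longrightarrow> f i + f j \<le> 0"
  shows "sum f N \<le> 0"
proof -
  have fin_S: "finite S" and fin_T: "finite T"
    using fin assms(2,3) finite_subset by blast+
  obtain T' where T': "T' \<subseteq> T" "card T' = card S"
    using obtain_subset_with_card_n[OF assms(5)] by blast
  have fin_T': "finite T'" using fin_T T' finite_subset by blast
  obtain g where g: "bij_betw g S T'"
    using finite_same_card_bij[OF fin_S fin_T'] T' by metis
  have g_T: "g i \<in> T" if "i \<in> S" for i using g T' bij_betwE that by blast
  have N: "N = S \<union> T' \<union> (N - (S \<union> T'))" using assms(2,3) T' by blast
  have "sum f N = sum f S + sum f T' + sum f (N - (S \<union> T'))"
    using fin fin_S fin_T' assms(4) T'(1)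
    by (subst N, subst sum.union_disjoint) (auto intro: sum.union_disjoint)
  also have "sum f S + sum f T' = (\<Sum>i\<in>S. f i + f (g i))"
    using sum.reindex_bij_betw[OF g, of f] by (simp add: sum.distrib)
  also have "\<dots> \<le> 0" using paired g_T by (intro sum_nonpos) auto
  also have "sum f (N - (S \<union> T')) \<le> 0" using outside by (intro sum_nonpos) auto
  finally show ?thesis by simp
qed

lemma dist_add_le_of_dist_le:
  fixes x y P Q Z :: "'a::metric_space"
  assumes "dist y P \<le> dist y Q"
  shows "dist x P + dist y P \<le> dist x Q + dist y Q + 2 * (dist x Z + dist y Z)"
proof -
  have "dist x P \<le> dist x Z + dist y Z + dist y P"
    by (metis add.assoc add_le_cancel_right dist_commute dist_triangle order_trans)
  moreover have "dist y Q \<le> dist y Z + dist x Z + dist x Q"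
    by (metis add.assoc add_le_cancel_right dist_commute dist_triangle order_trans)
  ultimately show ?thesis using assms by (simp add: algebra_simps)
qed

theorem mainTheorem16:
  fixes \<tau> :: real and N :: "'v set" and loc :: "'v \<Rightarrow> 'a::metric_space" and P Q Z :: 'a
  assumes "finite N" and "\<tau> \<ge> 1" and "wmr3_selects \<tau> N loc P Q"
  shows "social_cost N loc P \<le> \<tau> * social_cost N loc Q + 2 * social_cost N loc Z"
proof -
  define A where "A = wm3_A \<tau> N loc P Q"
  define B where "B = wm3_A \<tau> N loc Q P"
  define f where "f k = dist (loc k) P - \<tau> * dist (loc k) Q - 2 * dist (loc k) Z" for k
  have stretch: "d \<le> \<tau> * d" if "d \<ge> 0" for d
    using assms(2) that mult_right_mono[of 1 \<tau> d] by simp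
  have closer_to_P: "dist (loc j) P \<le> dist (loc j) Q" if "j \<in> A" for j
    using that stretch[of "dist (loc j) P"] by (auto simp: A_def wm3_A_def)
  have "card (B - A) \<le> card (A - B)"
    using assms(1,3) by (intro card_Diff_le_card_Diff) (auto simp: A_def B_def wm3_A_def wmr3_selects_def)
  then have "sum f N \<le> 0"
  proof (rule sum_nonpos_by_pairing[OF assms(1), rotated 3])
    show "B - A \<subseteq> N" "A - B \<subseteq> N" "(B - A) \<inter> (A - B) = {}"
      by (auto simp: A_def B_def wm3_A_def)
    show "f k \<le> 0" if "k \<in> N - (B - A)" for k
    proof -
      have "dist (loc k) P \<le> \<tau> * dist (loc k) Q"
        using that closer_to_P[of k] stretch[of "dist (loc k) Q"]
        by (cases "k \<in> A") (auto simp: B_def wm3_A_def)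
      then show ?thesis using zero_le_dist[of "loc k" Z] unfolding f_def by linarith
    qed
    show "f i + f j \<le> 0" if "i \<in> B - A" "j \<in> A - B" for i j
      using dist_add_le_of_dist_le[OF closer_to_P, of j "loc i" Z] that
        stretch[of "dist (loc i) Q"] stretch[of "dist (loc j) Q"]
      by (simp add: f_def)
  qed
  moreover have "sum f N = social_cost N loc P - \<tau> * social_cost N loc Q - 2 * social_cost N loc Z"
    by (simp add: f_def social_cost_def sum_subtractf sum_distrib_left)
  ultimately show ?thesis by simp
qed

end
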